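(* Let $0<q<1$. For complex numbers $a,b,c,d$ with $\mathrm{Re}(a+b+c+d)>0$, and such that every $q^2$-gamma value occurring below is evaluated at a point that is not a non-positive integer, \[ \sum_{n=0}^{\infty}\frac{(1-q^{4n+2a+1})(1/2|q^{2})_{a+n}(1/2|q^{2})_{n-b}(1/3|q^{2})_{n-c}(2/3|q^{2})_{n-d}}{(1-q^{2})[n]_{q^{2}}!\,(1|q^{2})_{a+b+n}(7/6|q^{2})_{a+c+n}(5/6|q^{2})_{a+d+n}}\,q^{2(a+b+c+d)n} \] \[ =\frac{(1/2|q^{2})_{-b}(1/3|q^{2})_{-c}(2/3|q^{2})_{-d}(1|q^{2})_{a+b+c+d-1}}{(1/3|q^{2})_{a+b+d}(2/3|q^{2})_{a+b+c}(1/2|q^{2})_{a+c+d}}\cdot\frac{[1/6]_{q^{2}}\,(q^{4/3},q^{2/3};q^{2})_{\infty}\,q^{1/4}}{(q^{1/3},q^{5/3};q^{2})_{\infty}\,\pi_{q}}. \]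
   Context: Let $0<q<1$ and write $q^{x}=e^{x\log q}$. $(z;q)_\infty=\prod_{k\ge0}(1-zq^k)$, $(z_1,z_2;q)_\infty=(z_1;q)_\infty(z_2;q)_\infty$. $\Gamma_{q^2}(x)=\frac{(q^2;q^2)_\infty}{(q^{2x};q^2)_\infty}(1-q^2)^{1-x}$; for complex $x,\alpha$, $(x|q^2)_\alpha=\Gamma_{q^2}(x+\alpha)/\Gamma_{q^2}(x)$. $[z]_{q^2}=\frac{1-q^{2z}}{1-q^2}$, $[0]_{q^2}!=1$, $[n]_{q^2}!=\prod_{k=1}^n[k]_{q^2}$. $\pi_q=(1-q^2)q^{1/4}\frac{(q^2;q^2)_\infty^2}{(q;q^2)_\infty^2}$. *)

theory Defs
  imports "HOL-Analysis.Analysis"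
begin

definition qpow :: "real \<Rightarrow> complex \<Rightarrow> complex" where
  "qpow q x = exp (x * of_real (ln q))"

definition qpoch_inf :: "complex \<Rightarrow> real \<Rightarrow> complex" where
  "qpoch_inf z p = (\<Prod>k. 1 - z * of_real (p ^ k))"

definition qgamma2 :: "real \<Rightarrow> complex \<Rightarrow> complex" where
  "qgamma2 q x = qpoch_inf (of_real (q^2)) (q^2) / qpoch_inf (qpow q (2 * x)) (q^2)
                 * exp ((1 - x) * of_real (ln (1 - q^2)))"

definition qshift2 :: "real \<Rightarrow> complex \<Rightarrow> complex \<Rightarrow> complex" where
  "qshift2 q x \<alpha> = qgamma2 q (x + \<alpha>) / qgamma2 q x"

definition qnum2 :: "real \<Rightarrow> complex \<Rightarrow> complex" where
  "qnum2 q z = (1 - qpow q (2 * z)) / of_real (1 - q^2)"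

definition qfact2 :: "real \<Rightarrow> nat \<Rightarrow> complex" where
  "qfact2 q n = (\<Prod>k=1..n. qnum2 q (of_nat k))"

definition pi_q :: "real \<Rightarrow> complex" where
  "pi_q q = of_real (1 - q^2) * qpow q (1/4) * qpoch_inf (of_real (q^2)) (q^2) ^ 2
            / qpoch_inf (of_real q) (q^2) ^ 2"

definition qgamma2_pole :: "real \<Rightarrow> complex \<Rightarrow> bool" where
  "qgamma2_pole q x \<longleftrightarrow> qpoch_inf (qpow q (2 * x)) (q^2) = 0"

end

theory Submission
  imports Defs
begin

text \<open>
  In terms of \<open>q\<^sup>2\<close>-Pochhammer symbols the series is the very-well-poised \<open>\<^sub>6\<phi>\<^sub>5\<close>
  series in base \<open>p = q^2\<close> with parameters \<open>A = q^(1+2a)\<close>, \<open>B = q^(1-2b)\<close>,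
  \<open>C = q^(2/3-2c)\<close>, \<open>D = q^(4/3-2d)\<close> and argument \<open>Ap/(BCD) = q^(2(a+b+c+d))\<close>, so the
  identity is Rogers' \<open>\<^sub>6\<phi>\<^sub>5\<close> summation written with \<open>\<Gamma>\<^sub>q\<^sub>2\<close>.

  The summation is proved by a contiguity argument. Writing \<open>F(A)\<close> for the sum, a telescoping
  identity between the terms gives
  \<open>(1 - Ap/B)(1 - Ap/C)(1 - Ap/D)(1 - Ap/BCD) F(A) = (1 - A)(1 - Ap/BC)(1 - Ap/BD)(1 - Ap/CD) F(Ap)\<close>.
  Iterating \<open>k\<close> times and letting \<open>k \<rightarrow> \<infinity>\<close>, where \<open>F(Ap^k) \<rightarrow> 1\<close> by a bound on the term
  ratios that is uniform in \<open>k\<close>, evaluates \<open>F(A)\<close> as a quotient of infinite products.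
  Converted back to \<open>\<Gamma>\<^sub>q\<^sub>2\<close>, the constant on the right-hand side is
  \<open>\<Gamma>\<^sub>q\<^sub>2(7/6) \<Gamma>\<^sub>q\<^sub>2(5/6) / (\<Gamma>\<^sub>q\<^sub>2(1/2)^2 \<Gamma>\<^sub>q\<^sub>2(1/3) \<Gamma>\<^sub>q\<^sub>2(2/3))\<close>.
\<close>

section \<open>Finite and infinite \<open>q\<close>-Pochhammer symbols\<close>

definition qpoch :: "complex \<Rightarrow> real \<Rightarrow> nat \<Rightarrow> complex" where
  "qpoch w p n = (\<Prod>k<n. 1 - w * of_real (p ^ k))"

lemma qpoch_0 [simp]: "qpoch w p 0 = 1"
  by (simp add: qpoch_def)

lemma qpoch_Suc: "qpoch w p (Suc n) = qpoch w p n * (1 - w * of_real p ^ n)"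
  by (simp add: qpoch_def)

lemma qpoch_add: "qpoch w p (m + n) = qpoch w p m * qpoch (w * of_real p ^ m) p n"
  by (induction n) (simp_all add: qpoch_Suc power_add mult_ac)

lemma qpoch_Suc_left: "qpoch w p (Suc n) = (1 - w) * qpoch (w * of_real p) p n"
  using qpoch_add[of w p 1 n] by (simp add: qpoch_def)

lemma qpoch_nonzero: "(\<And>k. w * of_real p ^ k \<noteq> 1) \<Longrightarrow> qpoch w p n \<noteq> 0"
  by (simp add: qpoch_def)

lemma convergent_prod_qpoch_inf:
  fixes w :: complex
  assumes "0 < p" "p < 1"
  shows "convergent_prod (\<lambda>k. 1 - w * of_real (p ^ k))"
proof -
  have "summable (\<lambda>k. norm w * p ^ k)"
    using assms by (intro summable_mult summable_geometric) auto
  then have "summable (\<lambda>k. norm ((1 - w * of_real (p ^ k)) - 1))"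
    using assms by (simp add: norm_mult norm_power)
  then show ?thesis
    by (intro abs_convergent_prod_imp_convergent_prod summable_imp_abs_convergent_prod)
qed

lemma qpoch_tendsto_qpoch_inf:
  assumes "0 < p" "p < 1"
  shows "(\<lambda>n. qpoch w p n) \<longlonglongrightarrow> qpoch_inf w p"
proof -
  have "(\<lambda>n. \<Prod>k\<le>n. 1 - w * of_real (p ^ k)) \<longlonglongrightarrow> qpoch_inf w p"
    unfolding qpoch_inf_def by (rule convergent_prod_LIMSEQ[OF convergent_prod_qpoch_inf[OF assms]])
  then have "(\<lambda>n. qpoch w p (Suc n)) \<longlonglongrightarrow> qpoch_inf w p"
    by (simp add: qpoch_def lessThan_Suc_atMost)
  then show ?thesis
    by (simp add: filterlim_sequentially_Suc)
qed

lemma qpoch_inf_split: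
  assumes "0 < p" "p < 1"
  shows "qpoch_inf w p = qpoch w p m * qpoch_inf (w * of_real p ^ m) p"
proof -
  have "(\<lambda>n. qpoch w p (m + n)) \<longlonglongrightarrow> qpoch w p m * qpoch_inf (w * of_real p ^ m) p"
    unfolding qpoch_add by (intro tendsto_mult tendsto_const qpoch_tendsto_qpoch_inf assms)
  moreover have "(\<lambda>n. qpoch w p (m + n)) \<longlonglongrightarrow> qpoch_inf w p"
    using LIMSEQ_ignore_initial_segment[OF qpoch_tendsto_qpoch_inf[OF assms], of w m]
    by (simp add: add.commute)
  ultimately show ?thesis
    by (metis LIMSEQ_unique)
qed

lemma qpoch_inf_Suc:
  assumes "0 < p" "p < 1"
  shows "qpoch_inf w p = (1 - w) * qpoch_inf (w * of_real p) p"
  using qpoch_inf_split[OF assms, of w 1] by (simp add: qpoch_def)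

lemma qpoch_inf_eq_0_iff:
  assumes "0 < p" "p < 1"
  shows "qpoch_inf w p = 0 \<longleftrightarrow> (\<exists>k. w * of_real p ^ k = 1)"
proof
  assume "qpoch_inf w p = 0"
  then show "\<exists>k. w * of_real p ^ k = 1"
    using prodinf_nonzero[OF convergent_prod_qpoch_inf[OF assms]]
    by (force simp: qpoch_inf_def)
next
  assume "\<exists>k. w * of_real p ^ k = 1"
  then obtain k where "w * of_real p ^ k = 1" ..
  then show "qpoch_inf w p = 0"
    using qpoch_inf_split[OF assms, of w "Suc k"] by (simp add: qpoch_Suc)
qed

lemma qpoch_nonzero_if_qpoch_inf_nonzero:
  assumes "0 < p" "p < 1" "qpoch_inf w p \<noteq> 0"
  shows "qpoch w p n \<noteq> 0"
  using qpoch_inf_split[OF assms(1,2), of w n] assms(3) by auto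

lemma qpoch_inf_nonzero_if_norm_less_1:
  assumes "0 < p" "p < 1" "norm w < 1"
  shows "qpoch_inf w p \<noteq> 0"
proof -
  have "norm (w * of_real p ^ k) < 1" for k
  proof -
    have "norm (w * of_real p ^ k) = norm w * p ^ k"
      using assms by (simp add: norm_mult norm_power)
    also have "\<dots> \<le> norm w"
      using assms by (simp add: mult_left_le power_le_one)
    finally show ?thesis using assms(3) by linarith
  qed
  then show ?thesis
    using assms(1,2) by (metis norm_one order.irrefl qpoch_inf_eq_0_iff)
qed

lemma qpoch_inf_factors_bounded_below:
  assumes "0 < p" "p < 1" "qpoch_inf w p \<noteq> 0"
  obtains \<delta> where "\<delta> > 0" "\<And>k. \<delta> \<le> norm (1 - w * of_real p ^ k)"
proof -
  let ?f = "\<lambda>k. norm (1 - w * of_real p ^ k)"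
  have "(\<lambda>k. w * of_real p ^ k) \<longlonglongrightarrow> w * 0"
    using assms by (intro tendsto_mult tendsto_const LIMSEQ_power_zero) auto
  then have "?f \<longlonglongrightarrow> norm (1 - w * 0)"
    by (intro tendsto_norm tendsto_diff tendsto_const)
  then obtain N where N: "\<And>k. k \<ge> N \<Longrightarrow> ?f k > 1/2"
    using order_tendstoD(1)[of ?f 1 sequentially "1/2"] by (auto simp: eventually_sequentially)
  have pos: "?f k > 0" for k
    using assms by (auto simp: qpoch_inf_eq_0_iff)
  define \<delta> where "\<delta> = Min (insert (1/2) (?f ` {..<N}))"
  have "\<delta> > 0"
    using pos by (simp add: \<delta>_def)
  moreover have "\<delta> \<le> ?f k" for k
  proof (cases "k < N")
    case True
    then show ?thesis by (simp add: \<delta>_def)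
  next
    case False
    moreover have "\<delta> \<le> 1/2" unfolding \<delta>_def by (intro Min_le) auto
    ultimately show ?thesis using N[of k] by simp
  qed
  ultimately show ?thesis using that by blast
qed

section \<open>The very-well-poised \<open>\<^sub>6\<phi>\<^sub>5\<close> summation\<close>

text \<open>The rational identity behind the contiguity relation, with \<open>u, v, w\<close> standing for
  \<open>1/b, 1/c, 1/d\<close>.\<close>
lemma vwp_contiguity_polynomial:
  fixes a p u v w x :: "'a::comm_ring_1"
  shows "(1 - a * p * u * v * w) * (1 - a * x * x)
        * ((1 - a * p * u * x) * (1 - a * p * v * x) * (1 - a * p * w * x))
      - (1 - a * p * u * v) * (1 - a * p * u * w) * (1 - a * p * v * w) * (1 - a * p * x * x)
        * (1 - a * x) * x
    = (1 - x) * (1 - a * (a * p * u * v * w) * x)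
        * ((1 - a * p * u * x) * (1 - a * p * v * x) * (1 - a * p * w * x))
      - (1 - a * (a * p * u * v * w) * p * x) * ((1 - a * x) * (a * p * (u - x) * (v - x) * (w - x)))"
  by (simp add: algebra_simps)

lemma vwp_contiguity_identity:
  fixes a p b c d x :: "'a::field"
  assumes "b \<noteq> 0" "c \<noteq> 0" "d \<noteq> 0"
  shows "(1 - a * p / (b * c * d)) * (1 - a * x * x)
        * ((1 - a * p / b * x) * (1 - a * p / c * x) * (1 - a * p / d * x))
      - (1 - a * p / (b * c)) * (1 - a * p / (b * d)) * (1 - a * p / (c * d)) * (1 - a * p * x * x)
        * (1 - a * x) * x
    = (1 - x) * (1 - a * (a * p / (b * c * d)) * x)
        * ((1 - a * p / b * x) * (1 - a * p / c * x) * (1 - a * p / d * x))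
      - (1 - a * (a * p / (b * c * d)) * p * x)
        * ((1 - a * x) * (1 - b * x) * (1 - c * x) * (1 - d * x) * (a * p / (b * c * d)))"
proof -
  have inv: "a * p * (1/b) = a * p / b" "a * p * (1/c) = a * p / c" "a * p * (1/d) = a * p / d"
    "a * p / b * (1/c) = a * p / (b * c)" "a * p / b * (1/d) = a * p / (b * d)"
    "a * p / c * (1/d) = a * p / (c * d)" "a * p / (b * c) * (1/d) = a * p / (b * c * d)"
    by simp_all
  have "1/e - x = (1 - e * x) / e" if "e \<noteq> 0" for e :: 'a
    using that by (simp add: field_simps)
  then have cleared: "(1 - a * x) * (a * p * (1/b - x) * (1/c - x) * (1/d - x))
      = (1 - a * x) * (1 - b * x) * (1 - c * x) * (1 - d * x) * (a * p / (b * c * d))"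
    using assms by simp
  show ?thesis
    using vwp_contiguity_polynomial[of a p "1/b" "1/c" "1/d" x] unfolding inv cleared .
qed

locale very_well_poised =
  fixes b c d :: complex and p :: real
  assumes p_pos: "0 < p" and p_less_1: "p < 1"
    and b_nonzero: "b \<noteq> 0" and c_nonzero: "c \<noteq> 0" and d_nonzero: "d \<noteq> 0"
begin

abbreviation P :: complex where "P \<equiv> of_real p"

definition admissible :: "complex \<Rightarrow> bool" where
  "admissible a \<longleftrightarrow> qpoch_inf (a * P / b) p \<noteq> 0 \<and> qpoch_inf (a * P / c) p \<noteq> 0
     \<and> qpoch_inf (a * P / d) p \<noteq> 0 \<and> norm (a * P / (b * c * d)) < 1"

definition wp_term :: "complex \<Rightarrow> nat \<Rightarrow> complex" where
  "wp_term a n = qpoch a p n * qpoch b p n * qpoch c p n * qpoch d p n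
     / (qpoch P p n * qpoch (a * P / b) p n * qpoch (a * P / c) p n * qpoch (a * P / d) p n)
     * (a * P / (b * c * d)) ^ n"

text \<open>The very-well-poised factor \<open>(1 - a p\<^sup>2\<^sup>n) / (1 - a)\<close> of the \<open>\<^sub>6\<phi>\<^sub>5\<close> series,
  multiplied by \<open>1 - a\<close>.\<close>
definition vwp_term :: "complex \<Rightarrow> nat \<Rightarrow> complex" where
  "vwp_term a n = (1 - a * P ^ (2 * n)) * wp_term a n"

definition wp_ratio :: "complex \<Rightarrow> nat \<Rightarrow> complex" where
  "wp_ratio a n = (1 - a * P ^ n) * (1 - b * P ^ n) * (1 - c * P ^ n) * (1 - d * P ^ n)
       * (a * P / (b * c * d))
     / ((1 - P * P ^ n) * (1 - a * P / b * P ^ n) * (1 - a * P / c * P ^ n) * (1 - a * P / d * P ^ n))"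

lemma P_power_neq_1: "P * P ^ k \<noteq> 1"
proof -
  have "p ^ Suc k < 1"
    using p_pos p_less_1 by (intro power_Suc_less_one)
  then show ?thesis
    by (metis of_real_eq_1_iff of_real_power power_Suc order.irrefl)
qed

lemma admissible_factors:
  assumes "admissible a"
  shows "1 - a * P / b * P ^ k \<noteq> 0" "1 - a * P / c * P ^ k \<noteq> 0" "1 - a * P / d * P ^ k \<noteq> 0"
  using assms p_pos p_less_1 by (auto simp: admissible_def qpoch_inf_eq_0_iff)

lemma admissible_qpoch_nonzero:
  assumes "admissible a"
  shows "qpoch P p n \<noteq> 0" "qpoch (a * P / b) p n \<noteq> 0" "qpoch (a * P / c) p n \<noteq> 0"
    "qpoch (a * P / d) p n \<noteq> 0"
  using admissible_factors[OF assms] P_power_neq_1 by (auto intro!: qpoch_nonzero)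

lemma admissible_shift:
  assumes "admissible a"
  shows "admissible (a * P)"
proof -
  have "qpoch_inf (a * P / e) p = (1 - a * P / e) * qpoch_inf (a * P * P / e) p" for e
    using qpoch_inf_Suc[OF p_pos p_less_1, of "a * P / e"] by simp
  moreover have "norm (a * P * P / (b * c * d)) = norm (a * P / (b * c * d)) * p"
    using p_pos by (simp add: norm_mult norm_divide)
  moreover have "norm (a * P / (b * c * d)) * p \<le> norm (a * P / (b * c * d))"
    using p_pos p_less_1 by (intro mult_left_le) auto
  ultimately show ?thesis
    using assms unfolding admissible_def by auto
qed

lemma admissible_shift_power:
  assumes "admissible a"
  shows "admissible (a * P ^ k)"
proof (induction k)
  case (Suc k)
  then show ?case
    using admissible_shift[of "a * P ^ k"] by (metis mult.assoc power_Suc2)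
qed (simp add: assms)

lemma wp_term_0 [simp]: "wp_term a 0 = 1"
  by (simp add: wp_term_def)

lemma wp_term_Suc:
  assumes "admissible a"
  shows "wp_term a (Suc n) = wp_term a n * wp_ratio a n"
  using admissible_qpoch_nonzero[OF assms, of n] admissible_factors[OF assms, of n] P_power_neq_1[of n]
  unfolding wp_term_def wp_ratio_def qpoch_Suc by (simp add: field_simps)

lemma wp_ratio_tendsto: "wp_ratio a \<longlonglongrightarrow> a * P / (b * c * d)"
proof -
  define f where "f x = (1 - a * x) * (1 - b * x) * (1 - c * x) * (1 - d * x) * (a * P / (b * c * d))
     / ((1 - P * x) * (1 - a * P / b * x) * (1 - a * P / c * x) * (1 - a * P / d * x))" for x
  have "(\<lambda>n. P ^ n) \<longlonglongrightarrow> 0"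
    using p_pos p_less_1 by (intro LIMSEQ_power_zero) auto
  moreover have "isCont f 0"
    unfolding f_def by (intro continuous_intros) auto
  ultimately have "(\<lambda>n. f (P ^ n)) \<longlonglongrightarrow> f 0"
    by (rule isCont_tendsto_compose[rotated])
  then show ?thesis
    by (simp add: f_def wp_ratio_def[abs_def])
qed

lemma summable_norm_wp_term:
  assumes "admissible a"
  shows "summable (\<lambda>n. norm (wp_term a n))"
proof -
  define r where "r = (1 + norm (a * P / (b * c * d))) / 2"
  have "norm (a * P / (b * c * d)) < r" "r < 1"
    using assms by (auto simp: r_def admissible_def)
  moreover have "(\<lambda>n. norm (wp_ratio a n)) \<longlonglongrightarrow> norm (a * P / (b * c * d))"
    by (intro tendsto_norm wp_ratio_tendsto)
  ultimately obtain N where N: "\<And>n. n \<ge> N \<Longrightarrow> norm (wp_ratio a n) < r"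
    using order_tendstoD(2) by (metis eventually_sequentially)
  show ?thesis
  proof (rule summable_ratio_test[OF \<open>r < 1\<close>, of N])
    fix n assume "n \<ge> N"
    then show "norm (norm (wp_term a (Suc n))) \<le> r * norm (norm (wp_term a n))"
      using N[of n] mult_left_mono[of "norm (wp_ratio a n)" r "norm (wp_term a n)"]
      by (simp add: wp_term_Suc[OF assms] norm_mult mult.commute)
  qed
qed

lemma norm_vwp_term_le: "norm (vwp_term a n) \<le> (1 + norm a) * norm (wp_term a n)"
proof -
  have "norm (1 - a * P ^ (2 * n)) \<le> 1 + norm a * p ^ (2 * n)"
    using norm_triangle_ineq4[of 1 "a * P ^ (2 * n)"] p_pos by (simp add: norm_mult norm_power)
  also have "\<dots> \<le> 1 + norm a"
    using p_pos p_less_1 by (simp add: mult_left_le power_le_one)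
  finally show ?thesis
    unfolding vwp_term_def norm_mult by (intro mult_right_mono) auto
qed

lemma summable_vwp_term:
  assumes "admissible a"
  shows "summable (vwp_term a)"
  by (rule summable_norm_cancel,
      rule summable_comparison_test[OF _ summable_mult[OF summable_norm_wp_term[OF assms]]])
    (use norm_vwp_term_le in auto)

lemma wp_term_shift:
  assumes "admissible a"
  shows "(1 - a) * wp_term (a * P) n
      * ((1 - a * P / b * P ^ n) * (1 - a * P / c * P ^ n) * (1 - a * P / d * P ^ n))
    = wp_term a n * ((1 - a * P ^ n) * ((1 - a * P / b) * (1 - a * P / c) * (1 - a * P / d)) * P ^ n)"
proof -
  have num: "(1 - a) * qpoch (a * P) p n = qpoch a p n * (1 - a * P ^ n)"
    using qpoch_Suc_left[of a p n] by (simp add: qpoch_Suc)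
  have den: "qpoch (a * P * P / e) p n = qpoch (a * P / e) p n * (1 - a * P / e * P ^ n) / (1 - a * P / e)"
    if "1 - a * P / e \<noteq> 0" for e
    using qpoch_Suc_left[of "a * P / e" p n] that by (simp add: qpoch_Suc field_simps)
  have z: "(a * P * P / (b * c * d)) ^ n = (a * P / (b * c * d)) ^ n * P ^ n"
    by (simp add: power_divide power_mult_distrib)
  note factors_0 = admissible_factors[OF assms, of 0, unfolded power_0 mult_1_right]
  define Q where "Q = (1 - a * P / b * P ^ n) * (1 - a * P / c * P ^ n) * (1 - a * P / d * P ^ n)"
  define rest where "rest = qpoch b p n * qpoch c p n * qpoch d p n
    / (qpoch P p n * qpoch (a * P * P / b) p n * qpoch (a * P * P / c) p n * qpoch (a * P * P / d) p n)
    * (a * P * P / (b * c * d)) ^ n"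
  have "(1 - a) * wp_term (a * P) n = ((1 - a) * qpoch (a * P) p n) * rest"
    by (simp add: wp_term_def rest_def)
  also have "\<dots> = wp_term a n
      * ((1 - a * P ^ n) * ((1 - a * P / b) * (1 - a * P / c) * (1 - a * P / d)) * P ^ n / Q)"
    using admissible_qpoch_nonzero[OF assms, of n] factors_0 admissible_factors[OF assms, of n]
      b_nonzero c_nonzero d_nonzero
    unfolding num wp_term_def rest_def Q_def z
      den[OF factors_0(1)] den[OF factors_0(2)] den[OF factors_0(3)]
    by (simp add: field_simps)
  finally have "(1 - a) * wp_term (a * P) n * Q = wp_term a n
      * ((1 - a * P ^ n) * ((1 - a * P / b) * (1 - a * P / c) * (1 - a * P / d)) * P ^ n / Q) * Q"
    by simp
  moreover have "Q \<noteq> 0"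
    using admissible_factors[OF assms, of n] by (simp add: Q_def)
  ultimately show ?thesis
    unfolding Q_def[symmetric] by simp
qed

lemma wp_term_Suc_cleared:
  assumes "admissible a"
  shows "(1 - P * P ^ n) * wp_term a (Suc n)
      * ((1 - a * P / b * P ^ n) * (1 - a * P / c * P ^ n) * (1 - a * P / d * P ^ n))
    = wp_term a n * ((1 - a * P ^ n) * (1 - b * P ^ n) * (1 - c * P ^ n) * (1 - d * P ^ n)
      * (a * P / (b * c * d)))"
proof -
  define Q where "Q = (1 - a * P / b * P ^ n) * (1 - a * P / c * P ^ n) * (1 - a * P / d * P ^ n)"
  define N where "N = (1 - a * P ^ n) * (1 - b * P ^ n) * (1 - c * P ^ n) * (1 - d * P ^ n)
    * (a * P / (b * c * d))"
  have "Q \<noteq> 0" "1 - P * P ^ n \<noteq> 0"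
    using admissible_factors[OF assms, of n] P_power_neq_1[of n] by (simp_all add: Q_def)
  moreover have "wp_ratio a n = N / ((1 - P * P ^ n) * Q)"
    unfolding wp_ratio_def N_def Q_def by (simp only: mult.assoc)
  ultimately have "(1 - P * P ^ n) * wp_ratio a n * Q = N"
    by simp
  moreover have "(1 - P * P ^ n) * wp_term a (Suc n) * Q
      = wp_term a n * ((1 - P * P ^ n) * wp_ratio a n * Q)"
    by (simp add: wp_term_Suc[OF assms] mult_ac)
  ultimately show ?thesis
    unfolding Q_def N_def by simp
qed

definition vwp_telescoper :: "complex \<Rightarrow> nat \<Rightarrow> complex" where
  "vwp_telescoper a n = (1 - a * P / b) * (1 - a * P / c) * (1 - a * P / d)
     * (1 - P ^ n) * (1 - a * (a * P / (b * c * d)) * P ^ n) * wp_term a n"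

lemma vwp_term_contiguity:
  assumes "admissible a"
  shows "(1 - a * P / b) * (1 - a * P / c) * (1 - a * P / d) * (1 - a * P / (b * c * d)) * vwp_term a n
     - (1 - a) * (1 - a * P / (b * c)) * (1 - a * P / (b * d)) * (1 - a * P / (c * d)) * vwp_term (a * P) n
     = vwp_telescoper a n - vwp_telescoper a (Suc n)"
proof -
  define x where "x = P ^ n"
  define T where "T = wp_term a n"
  define S where "S = wp_term (a * P) n"
  define U where "U = wp_term a (Suc n)"
  define z where "z = a * P / (b * c * d)"
  define W where "W = (1 - a * P / b) * (1 - a * P / c) * (1 - a * P / d)"
  define L where "L = (1 - a * P / (b * c)) * (1 - a * P / (b * d)) * (1 - a * P / (c * d))"
  define Q where "Q = (1 - a * P / b * x) * (1 - a * P / c * x) * (1 - a * P / d * x)"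
  define N where "N = (1 - a * x) * (1 - b * x) * (1 - c * x) * (1 - d * x) * z"
  have step: "(1 - P * x) * U * Q - T * N = 0"
    using wp_term_Suc_cleared[OF assms, of n] by (simp add: U_def T_def Q_def N_def x_def z_def)
  have shift: "(1 - a) * S * Q - T * ((1 - a * x) * W * x) = 0"
    using wp_term_shift[OF assms, of n] by (simp add: S_def T_def W_def Q_def x_def)
  have Q: "Q \<noteq> 0"
    using admissible_factors[OF assms, of n] by (simp add: Q_def x_def)
  have ident: "(1 - z) * (1 - a * x * x) * Q - L * (1 - a * P * x * x) * (1 - a * x) * x
    - ((1 - x) * (1 - a * z * x) * Q - (1 - a * z * P * x) * N) = 0"
    using vwp_contiguity_identity[of b c d a P x] b_nonzero c_nonzero d_nonzero
    unfolding Q_def N_def z_def L_def by (simp add: mult.assoc)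
  have "P ^ (2 * n) = x * x" "P ^ Suc n = P * x"
    by (simp_all add: x_def mult_2 power_add)
  then have "(W * (1 - z) * vwp_term a n - (1 - a) * L * vwp_term (a * P) n
      - (vwp_telescoper a n - vwp_telescoper a (Suc n))) * Q
    = W * T * ((1 - z) * (1 - a * x * x) * Q - L * (1 - a * P * x * x) * (1 - a * x) * x
        - ((1 - x) * (1 - a * z * x) * Q - (1 - a * z * P * x) * N))
      - L * (1 - a * P * x * x) * ((1 - a) * S * Q - T * ((1 - a * x) * W * x))
      + W * (1 - a * z * P * x) * ((1 - P * x) * U * Q - T * N)"
    unfolding vwp_term_def vwp_telescoper_def
      T_def[symmetric] S_def[symmetric] U_def[symmetric] W_def[symmetric] z_def[symmetric]
    by (simp add: x_def[symmetric] algebra_simps)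
  then have "W * (1 - z) * vwp_term a n - (1 - a) * L * vwp_term (a * P) n
      = vwp_telescoper a n - vwp_telescoper a (Suc n)"
    using ident shift step Q by simp
  then show ?thesis
    by (simp add: W_def L_def z_def mult.assoc)
qed

lemma vwp_sum_contiguity:
  assumes "admissible a"
  shows "(1 - a * P / b) * (1 - a * P / c) * (1 - a * P / d) * (1 - a * P / (b * c * d)) * suminf (vwp_term a)
     = (1 - a) * (1 - a * P / (b * c)) * (1 - a * P / (b * d)) * (1 - a * P / (c * d))
       * suminf (vwp_term (a * P))"
    (is "?K * _ = ?L * _")
proof -
  have "wp_term a \<longlonglongrightarrow> 0"
    using summable_LIMSEQ_zero[OF summable_norm_wp_term[OF assms]] by (simp add: tendsto_norm_zero_iff)
  moreover have "norm P < 1"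
    using p_pos p_less_1 by simp
  ultimately have "vwp_telescoper a \<longlonglongrightarrow>
      (1 - a * P / b) * (1 - a * P / c) * (1 - a * P / d) * (1 - 0) * (1 - a * (a * P / (b * c * d)) * 0) * 0"
    unfolding vwp_telescoper_def[abs_def] by (intro tendsto_intros)
  then have "(\<lambda>n. vwp_telescoper a n - vwp_telescoper a (Suc n)) sums 0"
    using telescope_sums'[of "vwp_telescoper a" 0] by (simp add: vwp_telescoper_def)
  moreover have "(\<lambda>n. ?K * vwp_term a n - ?L * vwp_term (a * P) n)
      sums (?K * suminf (vwp_term a) - ?L * suminf (vwp_term (a * P)))"
    using assms admissible_shift
    by (intro sums_diff sums_mult summable_sums summable_vwp_term)
  ultimately show ?thesis
    unfolding vwp_term_contiguity[OF assms] by (simp add: sums_iff)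
qed

lemma vwp_sum_iterate:
  assumes "admissible a"
  shows "qpoch (a * P / b) p k * qpoch (a * P / c) p k * qpoch (a * P / d) p k
      * qpoch (a * P / (b * c * d)) p k * suminf (vwp_term a)
    = qpoch a p k * qpoch (a * P / (b * c)) p k * qpoch (a * P / (b * d)) p k
      * qpoch (a * P / (c * d)) p k * suminf (vwp_term (a * P ^ k))"
proof (induction k)
  case (Suc k)
  define a' where "a' = a * P ^ k"
  have shifted: "a' * P / e = a * P / e * P ^ k" "a' * P = a * P ^ Suc k" for e
    by (simp_all add: a'_def mult_ac)
  have "qpoch (a * P / b) p (Suc k) * qpoch (a * P / c) p (Suc k) * qpoch (a * P / d) p (Suc k)
      * qpoch (a * P / (b * c * d)) p (Suc k) * suminf (vwp_term a)
    = (1 - a' * P / b) * (1 - a' * P / c) * (1 - a' * P / d) * (1 - a' * P / (b * c * d))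
      * (qpoch (a * P / b) p k * qpoch (a * P / c) p k * qpoch (a * P / d) p k
      * qpoch (a * P / (b * c * d)) p k * suminf (vwp_term a))"
    by (simp add: qpoch_Suc shifted mult_ac)
  also have "\<dots> = qpoch a p k * qpoch (a * P / (b * c)) p k * qpoch (a * P / (b * d)) p k
      * qpoch (a * P / (c * d)) p k
      * ((1 - a' * P / b) * (1 - a' * P / c) * (1 - a' * P / d) * (1 - a' * P / (b * c * d))
         * suminf (vwp_term a'))"
    unfolding Suc.IH by (simp add: a'_def mult_ac)
  also have "\<dots> = qpoch a p (Suc k) * qpoch (a * P / (b * c)) p (Suc k) * qpoch (a * P / (b * d)) p (Suc k)
      * qpoch (a * P / (c * d)) p (Suc k) * suminf (vwp_term (a * P ^ Suc k))"
    unfolding vwp_sum_contiguity[OF admissible_shift_power[OF assms, of k, folded a'_def]]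
    by (simp add: qpoch_Suc shifted a'_def mult_ac)
  finally show ?case .
qed simp

lemma norm_wp_ratio_shift_le:
  assumes "\<delta> > 0"
    and "\<And>m. \<delta> \<le> norm (1 - a * P / b * P ^ m)" "\<And>m. \<delta> \<le> norm (1 - a * P / c * P ^ m)"
    "\<And>m. \<delta> \<le> norm (1 - a * P / d * P ^ m)"
  shows "norm (wp_ratio (a * P ^ k) n)
    \<le> (1 + norm a) * (1 + norm b) * (1 + norm c) * (1 + norm d) * norm (a * P / (b * c * d))
       / ((1 - p) * \<delta> ^ 3) * p ^ k"
proof -
  define x where "x = P ^ n"
  have x: "norm x \<le> 1" "norm (P ^ k * x) \<le> 1"
    using p_pos p_less_1 by (simp_all add: x_def norm_mult norm_power power_le_one mult_le_one)
  have num_factor: "norm (1 - e * y) \<le> 1 + norm e" if "norm y \<le> 1" for e y :: complex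
    using norm_triangle_ineq4[of 1 "e * y"] mult_left_le[OF that, of "norm e"] by (simp add: norm_mult)
  have "norm (a * P ^ k * x) = norm a * norm (P ^ k * x)"
    by (simp add: norm_mult)
  then have na: "norm (1 - a * P ^ k * x) \<le> 1 + norm a"
    using num_factor[OF x(2), of a] by (simp add: mult.assoc)
  have nz: "norm (a * P ^ k * P / (b * c * d)) \<le> norm (a * P / (b * c * d)) * p ^ k"
    using p_pos by (simp add: norm_mult norm_divide norm_power field_simps)
  have num: "norm ((1 - a * P ^ k * x) * (1 - b * x) * (1 - c * x) * (1 - d * x) * (a * P ^ k * P / (b * c * d)))
      \<le> (1 + norm a) * (1 + norm b) * (1 + norm c) * (1 + norm d) * (norm (a * P / (b * c * d)) * p ^ k)"
    unfolding norm_mult[of _ "a * P ^ k * P / (b * c * d)"] norm_mult[of "_ * _ * _" "1 - d * x"]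
      norm_mult[of "_ * _" "1 - c * x"] norm_mult[of "1 - a * P ^ k * x" "1 - b * x"]
    by (intro mult_mono na nz num_factor[OF x(1)] mult_nonneg_nonneg norm_ge_zero) simp_all
  have "norm (P * x) \<le> p"
    using x(1) p_pos by (simp add: norm_mult mult_left_le)
  then have "1 - p \<le> norm (1 - P * x)"
    using norm_triangle_ineq2[of 1 "P * x"] by simp
  moreover have "\<delta> \<le> norm (1 - a * P ^ k * P / e * x)"
    if "\<And>m. \<delta> \<le> norm (1 - a * P / e * P ^ m)" for e
    using that[of "k + n"] by (simp add: x_def power_add mult_ac)
  ultimately have den: "(1 - p) * \<delta> ^ 3 \<le> norm ((1 - P * x) * (1 - a * P ^ k * P / b * x)
      * (1 - a * P ^ k * P / c * x) * (1 - a * P ^ k * P / d * x))"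
    using assms p_less_1 unfolding norm_mult power3_eq_cube mult.assoc[symmetric]
    by (intro mult_mono mult_nonneg_nonneg) auto
  have "norm (wp_ratio (a * P ^ k) n) \<le> (1 + norm a) * (1 + norm b) * (1 + norm c) * (1 + norm d)
      * (norm (a * P / (b * c * d)) * p ^ k) / ((1 - p) * \<delta> ^ 3)"
  proof -
    have "norm ((1 - a * P ^ k * x) * (1 - b * x) * (1 - c * x) * (1 - d * x) * (a * P ^ k * P / (b * c * d)))
        / norm ((1 - P * x) * (1 - a * P ^ k * P / b * x) * (1 - a * P ^ k * P / c * x) * (1 - a * P ^ k * P / d * x))
      \<le> (1 + norm a) * (1 + norm b) * (1 + norm c) * (1 + norm d)
        * (norm (a * P / (b * c * d)) * p ^ k) / ((1 - p) * \<delta> ^ 3)"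
      by (rule frac_le[OF _ num _ den]) (use assms(1) p_pos p_less_1 in auto)
    then show ?thesis
      unfolding wp_ratio_def x_def[symmetric] by (simp only: norm_divide)
  qed
  then show ?thesis
    by (simp add: mult_ac)
qed

lemma norm_wp_term_le_power:
  assumes "admissible a" and "\<And>n. norm (wp_ratio a n) \<le> e"
  shows "norm (wp_term a n) \<le> e ^ n"
proof (induction n)
  case (Suc n)
  have "norm (wp_term a (Suc n)) = norm (wp_term a n) * norm (wp_ratio a n)"
    by (simp add: wp_term_Suc[OF assms(1)] norm_mult)
  also have "\<dots> \<le> e ^ n * e"
    using Suc.IH assms(2)[of n] order_trans[OF norm_ge_zero assms(2)] by (intro mult_mono) auto
  finally show ?case
    by (simp add: mult.commute)
qed simp

lemma norm_suminf_vwp_term_minus_1_le: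
  assumes "admissible a" "0 \<le> e" "e \<le> 1/2" and "\<And>n. norm (wp_ratio a n) \<le> e"
  shows "norm (suminf (vwp_term a) - 1) \<le> norm a + 2 * (1 + norm a) * e"
proof -
  have tail_le: "norm (vwp_term a (Suc n)) \<le> (1 + norm a) * e * (1/2) ^ n" for n
  proof -
    have "norm (vwp_term a (Suc n)) \<le> (1 + norm a) * e ^ Suc n"
      using norm_vwp_term_le[of a "Suc n"]
        mult_left_mono[OF norm_wp_term_le_power[OF assms(1,4)], of "1 + norm a" "Suc n"]
      by (meson order_trans add_nonneg_nonneg norm_ge_zero zero_le_one)
    also have "\<dots> \<le> (1 + norm a) * (e * (1/2) ^ n)"
      using power_mono[of e "1/2" n] assms(2,3) by (intro mult_left_mono) (auto intro: mult_left_mono)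
    finally show ?thesis
      by (simp add: mult.assoc)
  qed
  have geometric: "(\<lambda>n. (1 + norm a) * e * (1/2) ^ n) sums ((1 + norm a) * e * 2)"
    using sums_mult[OF geometric_sums[of "1/2 :: real"], of "(1 + norm a) * e"] by simp
  have "suminf (vwp_term a) - 1 = - a + (\<Sum>n. vwp_term a (Suc n))"
    using suminf_split_head[OF summable_vwp_term[OF assms(1)]] by (simp add: vwp_term_def)
  also have "norm \<dots> \<le> norm a + (1 + norm a) * e * 2"
    using norm_triangle_ineq[of "- a" "\<Sum>n. vwp_term a (Suc n)"]
      norm_suminf_le[OF tail_le sums_summable[OF geometric]] sums_unique[OF geometric]
    by simp
  finally show ?thesis
    by (simp add: mult_ac)
qed

lemma wp_ratio_shift_uniformly_bounded:
  assumes "admissible a"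
  obtains M where "\<And>k n. norm (wp_ratio (a * P ^ k) n) \<le> M * p ^ k"
proof -
  obtain \<delta>b \<delta>c \<delta>d where pos: "\<delta>b > 0" "\<delta>c > 0" "\<delta>d > 0"
    and "\<And>m. \<delta>b \<le> norm (1 - a * P / b * P ^ m)" "\<And>m. \<delta>c \<le> norm (1 - a * P / c * P ^ m)"
      "\<And>m. \<delta>d \<le> norm (1 - a * P / d * P ^ m)"
    using qpoch_inf_factors_bounded_below[OF p_pos p_less_1] assms unfolding admissible_def by metis
  then have "\<And>m. min \<delta>b (min \<delta>c \<delta>d) \<le> norm (1 - a * P / b * P ^ m)"
    "\<And>m. min \<delta>b (min \<delta>c \<delta>d) \<le> norm (1 - a * P / c * P ^ m)"
    "\<And>m. min \<delta>b (min \<delta>c \<delta>d) \<le> norm (1 - a * P / d * P ^ m)"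
    by (simp_all add: min_le_iff_disj)
  from norm_wp_ratio_shift_le[OF _ this] pos that show ?thesis
    by (metis min_less_iff_conj)
qed

lemma vwp_sum_shift_tendsto_1:
  assumes "admissible a"
  shows "(\<lambda>k. suminf (vwp_term (a * P ^ k))) \<longlonglongrightarrow> 1"
proof -
  obtain M where M: "\<And>k n. norm (wp_ratio (a * P ^ k) n) \<le> M * p ^ k"
    using wp_ratio_shift_uniformly_bounded[OF assms] by blast
  have Mp: "(\<lambda>k. M * p ^ k) \<longlonglongrightarrow> 0" "(\<lambda>k. p ^ k) \<longlonglongrightarrow> 0"
    using p_pos p_less_1 by (auto intro!: tendsto_mult_right_zero LIMSEQ_power_zero)
  have "\<forall>\<^sub>F k in sequentially. M * p ^ k < 1/2"
    using order_tendstoD(2)[OF Mp(1), of "1/2"] by simp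
  then have "\<forall>\<^sub>F k in sequentially.
      norm (suminf (vwp_term (a * P ^ k)) - 1) \<le> norm a * p ^ k + 2 * (1 + norm a) * (M * p ^ k)"
  proof eventually_elim
    case (elim k)
    have norm_shift: "norm (a * P ^ k) = norm a * p ^ k"
      using p_pos by (simp add: norm_mult norm_power)
    have "0 \<le> M * p ^ k"
      using M[of k 0] norm_ge_zero order_trans by blast
    moreover have "norm a * p ^ k \<le> norm a"
      using p_pos p_less_1 by (simp add: mult_left_le power_le_one)
    ultimately have "2 * (1 + norm a * p ^ k) * (M * p ^ k) \<le> 2 * (1 + norm a) * (M * p ^ k)"
      by (intro mult_right_mono) auto
    then show ?case
      using norm_suminf_vwp_term_minus_1_le[OF admissible_shift_power[OF assms] _ _ M, of k] elim
        \<open>0 \<le> M * p ^ k\<close>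
      unfolding norm_shift by linarith
  qed
  moreover have "(\<lambda>k. norm a * p ^ k + 2 * (1 + norm a) * (M * p ^ k)) \<longlonglongrightarrow> 0"
    using Mp by (auto intro!: tendsto_add_zero tendsto_mult_right_zero)
  ultimately have "(\<lambda>k. suminf (vwp_term (a * P ^ k)) - 1) \<longlonglongrightarrow> 0"
    by (rule Lim_null_comparison)
  then show ?thesis
    by (simp add: LIM_zero_iff)
qed

theorem vwp_sum:
  assumes "admissible a"
  shows "vwp_term a sums
    (qpoch_inf a p * qpoch_inf (a * P / (b * c)) p * qpoch_inf (a * P / (b * d)) p
      * qpoch_inf (a * P / (c * d)) p
     / (qpoch_inf (a * P / b) p * qpoch_inf (a * P / c) p * qpoch_inf (a * P / d) p
      * qpoch_inf (a * P / (b * c * d)) p))"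
proof -
  note lim = qpoch_tendsto_qpoch_inf[OF p_pos p_less_1]
  have "(\<lambda>k. qpoch (a * P / b) p k * qpoch (a * P / c) p k * qpoch (a * P / d) p k
      * qpoch (a * P / (b * c * d)) p k * suminf (vwp_term a))
    \<longlonglongrightarrow> qpoch_inf (a * P / b) p * qpoch_inf (a * P / c) p * qpoch_inf (a * P / d) p
      * qpoch_inf (a * P / (b * c * d)) p * suminf (vwp_term a)"
    by (intro tendsto_intros lim)
  moreover have "(\<lambda>k. qpoch (a * P / b) p k * qpoch (a * P / c) p k * qpoch (a * P / d) p k
      * qpoch (a * P / (b * c * d)) p k * suminf (vwp_term a))
    \<longlonglongrightarrow> qpoch_inf a p * qpoch_inf (a * P / (b * c)) p * qpoch_inf (a * P / (b * d)) p
      * qpoch_inf (a * P / (c * d)) p * 1"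
    unfolding vwp_sum_iterate[OF assms] by (intro tendsto_intros lim vwp_sum_shift_tendsto_1 assms)
  ultimately have "qpoch_inf (a * P / b) p * qpoch_inf (a * P / c) p * qpoch_inf (a * P / d) p
      * qpoch_inf (a * P / (b * c * d)) p * suminf (vwp_term a)
    = qpoch_inf a p * qpoch_inf (a * P / (b * c)) p * qpoch_inf (a * P / (b * d)) p
      * qpoch_inf (a * P / (c * d)) p"
    using LIMSEQ_unique by fastforce
  moreover have "qpoch_inf (a * P / (b * c * d)) p \<noteq> 0"
    using assms p_pos p_less_1 by (simp add: admissible_def qpoch_inf_nonzero_if_norm_less_1)
  ultimately have "suminf (vwp_term a) = qpoch_inf a p * qpoch_inf (a * P / (b * c)) p
      * qpoch_inf (a * P / (b * d)) p * qpoch_inf (a * P / (c * d)) p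
     / (qpoch_inf (a * P / b) p * qpoch_inf (a * P / c) p * qpoch_inf (a * P / d) p
      * qpoch_inf (a * P / (b * c * d)) p)"
    using assms by (simp add: admissible_def field_simps)
  then show ?thesis
    using summable_sums[OF summable_vwp_term[OF assms]] by simp
qed

end

section \<open>Powers of \<open>q\<close> and the \<open>q\<^sup>2\<close>-gamma function\<close>

lemma qpow_add: "qpow q (x + y) = qpow q x * qpow q y"
  by (simp add: qpow_def distrib_right exp_add)

lemma qpow_diff: "qpow q (x - y) = qpow q x / qpow q y"
  by (simp add: qpow_def left_diff_distrib exp_diff)

lemma qpow_nonzero: "qpow q x \<noteq> 0"
  by (simp add: qpow_def)

lemma qpow_of_nat: "0 < q \<Longrightarrow> qpow q (of_nat n) = of_real q ^ n"
  by (simp add: qpow_def exp_of_nat_mult exp_of_real)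

lemma qpow_2: "0 < q \<Longrightarrow> qpow q 2 = of_real (q ^ 2)"
  using qpow_of_nat[of q 2] by simp

lemma square_in_unit_interval:
  fixes q :: real
  assumes "0 < q" "q < 1"
  shows "0 < q ^ 2" "q ^ 2 < 1"
  using assms by (auto simp: power_less_one_iff)

lemma qpow_mult_of_nat: "qpow q (x * of_nat n) = qpow q x ^ n"
  by (simp add: qpow_def exp_of_nat_mult[symmetric] mult_ac)

lemma qpow_2_mult_of_nat: "0 < q \<Longrightarrow> qpow q (2 * of_nat n) = of_real (q ^ 2) ^ n"
  using qpow_of_nat[of q "2 * n"] by (simp add: power_mult)

lemma norm_qpow_less_1:
  assumes "0 < q" "q < 1" "0 < Re x"
  shows "norm (qpow q x) < 1"
  using assms by (simp add: qpow_def norm_exp_eq_Re mult_pos_neg ln_less_zero)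

lemma qpoch_inf_q2_nonzero:
  assumes "0 < q" "q < 1"
  shows "qpoch_inf (of_real (q ^ 2)) (q ^ 2) \<noteq> 0"
  using assms by (intro qpoch_inf_nonzero_if_norm_less_1) (auto simp: norm_power power_less_one_iff)

text \<open>At a pole the definition divides by zero, so \<open>qgamma2\<close> vanishes there.\<close>
lemma qgamma2_eq_0_iff:
  assumes "0 < q" "q < 1"
  shows "qgamma2 q x = 0 \<longleftrightarrow> qgamma2_pole q x"
  using qpoch_inf_q2_nonzero[OF assms] by (simp add: qgamma2_def qgamma2_pole_def)

lemma qgamma2_nonzero_if_Re_pos:
  assumes "0 < q" "q < 1" "0 < Re x"
  shows "qgamma2 q x \<noteq> 0"
  using assms square_in_unit_interval[OF assms(1,2)]
  by (simp add: qgamma2_eq_0_iff qgamma2_pole_def qpoch_inf_nonzero_if_norm_less_1 norm_qpow_less_1)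

lemma qshift2_add:
  assumes "qgamma2 q (x + y) \<noteq> 0"
  shows "qshift2 q x (y + z) = qshift2 q x y * qshift2 q (x + y) z"
  using assms by (simp add: qshift2_def add.assoc)

lemma qpoch_inf_qpow_eq_qgamma2:
  assumes "0 < q" "q < 1" "\<not> qgamma2_pole q x"
  shows "qpoch_inf (qpow q (2 * x)) (q ^ 2)
    = qpoch_inf (of_real (q ^ 2)) (q ^ 2) * exp ((1 - x) * of_real (ln (1 - q ^ 2))) / qgamma2 q x"
  using assms qpoch_inf_q2_nonzero[OF assms(1,2)] by (simp add: qgamma2_def qgamma2_pole_def)

lemma qshift2_of_nat:
  assumes "0 < q" "q < 1" "\<not> qgamma2_pole q x"
  shows "qshift2 q x (of_nat n) = qpoch (qpow q (2 * x)) (q ^ 2) n / of_real ((1 - q ^ 2) ^ n)"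
proof -
  define l where "l = (of_real (ln (1 - q ^ 2)) :: complex)"
  note q2 = square_in_unit_interval[OF assms(1,2)]
  have "qpow q (2 * (x + of_nat n)) = qpow q (2 * x) * of_real (q ^ 2) ^ n"
    using assms(1) by (simp add: distrib_left qpow_add qpow_2_mult_of_nat)
  then have split: "qpoch_inf (qpow q (2 * x)) (q ^ 2)
      = qpoch (qpow q (2 * x)) (q ^ 2) n * qpoch_inf (qpow q (2 * (x + of_nat n))) (q ^ 2)"
    using qpoch_inf_split[OF q2] by simp
  then have "\<not> qgamma2_pole q (x + of_nat n)"
    using assms(3) by (auto simp: qgamma2_pole_def)
  moreover have "exp ((1 - (x + of_nat n)) * l) = exp ((1 - x) * l) / of_real ((1 - q ^ 2) ^ n)"
  proof -
    have "exp ((1 - (x + of_nat n)) * l) = exp ((1 - x) * l) / exp (of_nat n * l)"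
      by (simp add: algebra_simps exp_diff[symmetric])
    also have "exp (of_nat n * l) = of_real ((1 - q ^ 2) ^ n)"
      using q2 by (simp add: l_def exp_of_nat_mult exp_of_real)
    finally show ?thesis .
  qed
  ultimately show ?thesis
    using assms split qpoch_inf_q2_nonzero[OF assms(1,2)]
    unfolding qshift2_def qgamma2_def qgamma2_pole_def l_def[symmetric]
    by (simp add: field_simps)
qed

lemma qfact2_eq:
  assumes "0 < q" "q < 1"
  shows "qfact2 q n = qpoch (of_real (q ^ 2)) (q ^ 2) n / of_real ((1 - q ^ 2) ^ n)"
proof (induction n)
  case (Suc n)
  have "q ^ 2 \<noteq> 1"
    using square_in_unit_interval[OF assms] by simp
  moreover have "qnum2 q (of_nat (Suc n)) = (1 - of_real (q ^ 2) ^ Suc n) / of_real (1 - q ^ 2)"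
    using assms(1) qpow_2_mult_of_nat[of q "Suc n"] by (simp add: qnum2_def)
  ultimately show ?case
    using Suc.IH by (simp add: qfact2_def qpoch_Suc field_simps)
qed (simp add: qfact2_def)

section \<open>The summation in terms of \<open>\<Gamma>\<^sub>q\<^sub>2\<close>\<close>

lemma qpow_vwp_ratios:
  fixes \<alpha> \<beta> \<gamma> \<delta> :: complex
  assumes "0 < q"
  shows "qpow q (2 * \<alpha>) * of_real (q ^ 2) / qpow q (2 * \<beta>) = qpow q (2 * (\<alpha> + 1 - \<beta>))"
    "qpow q (2 * \<alpha>) * of_real (q ^ 2) / qpow q (2 * \<gamma>) = qpow q (2 * (\<alpha> + 1 - \<gamma>))"
    "qpow q (2 * \<alpha>) * of_real (q ^ 2) / qpow q (2 * \<delta>) = qpow q (2 * (\<alpha> + 1 - \<delta>))"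
    "qpow q (2 * \<alpha>) * of_real (q ^ 2) / (qpow q (2 * \<beta>) * qpow q (2 * \<gamma>))
      = qpow q (2 * (\<alpha> + 1 - \<beta> - \<gamma>))"
    "qpow q (2 * \<alpha>) * of_real (q ^ 2) / (qpow q (2 * \<beta>) * qpow q (2 * \<delta>))
      = qpow q (2 * (\<alpha> + 1 - \<beta> - \<delta>))"
    "qpow q (2 * \<alpha>) * of_real (q ^ 2) / (qpow q (2 * \<gamma>) * qpow q (2 * \<delta>))
      = qpow q (2 * (\<alpha> + 1 - \<gamma> - \<delta>))"
    "qpow q (2 * \<alpha>) * of_real (q ^ 2) / (qpow q (2 * \<beta>) * qpow q (2 * \<gamma>) * qpow q (2 * \<delta>))
      = qpow q (2 * (\<alpha> + 1 - \<beta> - \<gamma> - \<delta>))"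
proof -
  have ratio: "qpow q (2 * \<alpha>) * of_real (q ^ 2) / qpow q y = qpow q (2 * \<alpha> + 2 - y)" for y
    using assms by (simp add: qpow_add qpow_diff qpow_2)
  show "qpow q (2 * \<alpha>) * of_real (q ^ 2) / qpow q (2 * \<beta>) = qpow q (2 * (\<alpha> + 1 - \<beta>))"
    "qpow q (2 * \<alpha>) * of_real (q ^ 2) / qpow q (2 * \<gamma>) = qpow q (2 * (\<alpha> + 1 - \<gamma>))"
    "qpow q (2 * \<alpha>) * of_real (q ^ 2) / qpow q (2 * \<delta>) = qpow q (2 * (\<alpha> + 1 - \<delta>))"
    using ratio[of "2 * \<beta>"] ratio[of "2 * \<gamma>"] ratio[of "2 * \<delta>"] by (simp_all add: algebra_simps)
  show "qpow q (2 * \<alpha>) * of_real (q ^ 2) / (qpow q (2 * \<beta>) * qpow q (2 * \<gamma>))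
      = qpow q (2 * (\<alpha> + 1 - \<beta> - \<gamma>))"
    using ratio[of "2 * \<beta> + 2 * \<gamma>"] by (simp add: qpow_add algebra_simps)
  show "qpow q (2 * \<alpha>) * of_real (q ^ 2) / (qpow q (2 * \<beta>) * qpow q (2 * \<delta>))
      = qpow q (2 * (\<alpha> + 1 - \<beta> - \<delta>))"
    using ratio[of "2 * \<beta> + 2 * \<delta>"] by (simp add: qpow_add algebra_simps)
  show "qpow q (2 * \<alpha>) * of_real (q ^ 2) / (qpow q (2 * \<gamma>) * qpow q (2 * \<delta>))
      = qpow q (2 * (\<alpha> + 1 - \<gamma> - \<delta>))"
    using ratio[of "2 * \<gamma> + 2 * \<delta>"] by (simp add: qpow_add algebra_simps)
  show "qpow q (2 * \<alpha>) * of_real (q ^ 2) / (qpow q (2 * \<beta>) * qpow q (2 * \<gamma>) * qpow q (2 * \<delta>))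
      = qpow q (2 * (\<alpha> + 1 - \<beta> - \<gamma> - \<delta>))"
    using ratio[of "2 * \<beta> + 2 * \<gamma> + 2 * \<delta>"] by (simp add: qpow_add algebra_simps)
qed

lemma qgamma2_vwp_term_eq:
  fixes q :: real and \<alpha> \<beta> \<gamma> \<delta> :: complex
  assumes q: "0 < q" "q < 1"
    and poles: "\<forall>x \<in> {\<alpha>, \<beta>, \<gamma>, \<delta>, \<alpha> + 1 - \<beta>, \<alpha> + 1 - \<gamma>, \<alpha> + 1 - \<delta>}. \<not> qgamma2_pole q x"
  shows "(1 - qpow q (2 * \<alpha> + 4 * of_nat n)) * qshift2 q \<alpha> (of_nat n) * qshift2 q \<beta> (of_nat n)
        * qshift2 q \<gamma> (of_nat n) * qshift2 q \<delta> (of_nat n)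
      / (of_real (1 - q ^ 2) * qfact2 q n * qshift2 q (\<alpha> + 1 - \<beta>) (of_nat n)
        * qshift2 q (\<alpha> + 1 - \<gamma>) (of_nat n) * qshift2 q (\<alpha> + 1 - \<delta>) (of_nat n))
      * qpow q (2 * (\<alpha> + 1 - \<beta> - \<gamma> - \<delta>) * of_nat n)
    = very_well_poised.vwp_term (qpow q (2 * \<beta>)) (qpow q (2 * \<gamma>)) (qpow q (2 * \<delta>)) (q ^ 2)
        (qpow q (2 * \<alpha>)) n / of_real (1 - q ^ 2)"
proof -
  note q2 = square_in_unit_interval[OF q]
  interpret very_well_poised "qpow q (2 * \<beta>)" "qpow q (2 * \<gamma>)" "qpow q (2 * \<delta>)" "q ^ 2"
    using q2 by unfold_locales (simp_all add: qpow_nonzero)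
  have nopole: "\<not> qgamma2_pole q \<alpha>" "\<not> qgamma2_pole q \<beta>" "\<not> qgamma2_pole q \<gamma>"
    "\<not> qgamma2_pole q \<delta>" "\<not> qgamma2_pole q (\<alpha> + 1 - \<beta>)" "\<not> qgamma2_pole q (\<alpha> + 1 - \<gamma>)"
    "\<not> qgamma2_pole q (\<alpha> + 1 - \<delta>)"
    using poles by simp_all
  have qpoch_qpow_nonzero: "qpoch (qpow q (2 * x)) (q ^ 2) n \<noteq> 0" if "\<not> qgamma2_pole q x" for x
    using that q2 by (simp add: qgamma2_pole_def qpoch_nonzero_if_qpoch_inf_nonzero)
  have "qpoch (of_real (q ^ 2)) (q ^ 2) n \<noteq> 0"
    using q2 qpoch_inf_q2_nonzero[OF q] by (simp add: qpoch_nonzero_if_qpoch_inf_nonzero)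
  moreover have "qpow q (2 * \<alpha> + 4 * of_nat n) = qpow q (2 * \<alpha>) * of_real (q ^ 2) ^ (2 * n)"
    using q(1) qpow_2_mult_of_nat[of q "2 * n"] by (simp add: qpow_add)
  moreover have "of_real ((1 - q ^ 2) ^ n) \<noteq> (0 :: complex)" "of_real (1 - q ^ 2) \<noteq> (0 :: complex)"
    unfolding of_real_eq_0_iff using q2 by simp_all
  ultimately show ?thesis
    using qpow_nonzero[of q] qpoch_qpow_nonzero[OF nopole(1)] qpoch_qpow_nonzero[OF nopole(2)]
      qpoch_qpow_nonzero[OF nopole(3)] qpoch_qpow_nonzero[OF nopole(4)] qpoch_qpow_nonzero[OF nopole(5)]
      qpoch_qpow_nonzero[OF nopole(6)] qpoch_qpow_nonzero[OF nopole(7)]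
    unfolding vwp_term_def wp_term_def qpow_vwp_ratios[OF q(1)]
      qfact2_eq[OF q] qshift2_of_nat[OF q nopole(1)] qshift2_of_nat[OF q nopole(2)]
      qshift2_of_nat[OF q nopole(3)] qshift2_of_nat[OF q nopole(4)] qshift2_of_nat[OF q nopole(5)]
      qshift2_of_nat[OF q nopole(6)] qshift2_of_nat[OF q nopole(7)] qpow_mult_of_nat
    by (simp add: field_simps)
qed

lemma qpoch_inf_vwp_quotient_eq_qgamma2:
  fixes q :: real and \<alpha> \<beta> \<gamma> \<delta> :: complex
  assumes q: "0 < q" "q < 1"
    and poles: "\<forall>x \<in> {\<alpha>, \<alpha> + 1 - \<beta>, \<alpha> + 1 - \<gamma>, \<alpha> + 1 - \<delta>, \<alpha> + 1 - \<beta> - \<gamma>, \<alpha> + 1 - \<beta> - \<delta>,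
      \<alpha> + 1 - \<gamma> - \<delta>, \<alpha> + 1 - \<beta> - \<gamma> - \<delta>}. \<not> qgamma2_pole q x"
  shows "qpoch_inf (qpow q (2 * \<alpha>)) (q ^ 2) * qpoch_inf (qpow q (2 * (\<alpha> + 1 - \<beta> - \<gamma>))) (q ^ 2)
      * qpoch_inf (qpow q (2 * (\<alpha> + 1 - \<beta> - \<delta>))) (q ^ 2)
      * qpoch_inf (qpow q (2 * (\<alpha> + 1 - \<gamma> - \<delta>))) (q ^ 2)
     / (qpoch_inf (qpow q (2 * (\<alpha> + 1 - \<beta>))) (q ^ 2) * qpoch_inf (qpow q (2 * (\<alpha> + 1 - \<gamma>))) (q ^ 2)
      * qpoch_inf (qpow q (2 * (\<alpha> + 1 - \<delta>))) (q ^ 2)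
      * qpoch_inf (qpow q (2 * (\<alpha> + 1 - \<beta> - \<gamma> - \<delta>))) (q ^ 2)) / of_real (1 - q ^ 2)
    = qgamma2 q (\<alpha> + 1 - \<beta>) * qgamma2 q (\<alpha> + 1 - \<gamma>) * qgamma2 q (\<alpha> + 1 - \<delta>)
        * qgamma2 q (\<alpha> + 1 - \<beta> - \<gamma> - \<delta>)
      / (qgamma2 q \<alpha> * qgamma2 q (\<alpha> + 1 - \<beta> - \<gamma>) * qgamma2 q (\<alpha> + 1 - \<beta> - \<delta>)
        * qgamma2 q (\<alpha> + 1 - \<gamma> - \<delta>))"
proof -
  note q2 = square_in_unit_interval[OF q]
  have nopole: "\<not> qgamma2_pole q \<alpha>" "\<not> qgamma2_pole q (\<alpha> + 1 - \<beta>)" "\<not> qgamma2_pole q (\<alpha> + 1 - \<gamma>)"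
    "\<not> qgamma2_pole q (\<alpha> + 1 - \<delta>)" "\<not> qgamma2_pole q (\<alpha> + 1 - \<beta> - \<gamma>)"
    "\<not> qgamma2_pole q (\<alpha> + 1 - \<beta> - \<delta>)" "\<not> qgamma2_pole q (\<alpha> + 1 - \<gamma> - \<delta>)"
    "\<not> qgamma2_pole q (\<alpha> + 1 - \<beta> - \<gamma> - \<delta>)"
    using poles by simp_all
  define l where "l = (of_real (ln (1 - q ^ 2)) :: complex)"
  define e where "e x = exp ((1 - x) * l)" for x
  have exp_l: "exp l = of_real (1 - q ^ 2)"
    using q2 by (simp add: l_def exp_of_real)
  txt \<open>The powers of \<open>1 - q\<^sup>2\<close> carried by the eight gamma values multiply to \<open>1 - q\<^sup>2\<close>.\<close>
  have e_\<alpha>: "e \<alpha> = exp l * e (\<alpha> + 1 - \<beta>) * e (\<alpha> + 1 - \<gamma>) * e (\<alpha> + 1 - \<delta>)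
      * e (\<alpha> + 1 - \<beta> - \<gamma> - \<delta>) / (e (\<alpha> + 1 - \<beta> - \<gamma>) * e (\<alpha> + 1 - \<beta> - \<delta>) * e (\<alpha> + 1 - \<gamma> - \<delta>))"
    unfolding e_def exp_add[symmetric] exp_diff[symmetric]
    by (rule arg_cong[where f = exp]) (simp add: algebra_simps)
  have "qgamma2 q x \<noteq> 0" if "\<not> qgamma2_pole q x" for x
    using that qgamma2_eq_0_iff[OF q] by simp
  moreover have "e x \<noteq> 0" for x
    by (simp add: e_def)
  moreover have "(of_real (1 - q ^ 2) :: complex) \<noteq> 0"
    unfolding of_real_eq_0_iff using q2 by simp
  ultimately show ?thesis
    using nopole qpoch_inf_q2_nonzero[OF q] q2
    unfolding qpoch_inf_qpow_eq_qgamma2[OF q nopole(1)] qpoch_inf_qpow_eq_qgamma2[OF q nopole(2)]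
      qpoch_inf_qpow_eq_qgamma2[OF q nopole(3)] qpoch_inf_qpow_eq_qgamma2[OF q nopole(4)]
      qpoch_inf_qpow_eq_qgamma2[OF q nopole(5)] qpoch_inf_qpow_eq_qgamma2[OF q nopole(6)]
      qpoch_inf_qpow_eq_qgamma2[OF q nopole(7)] qpoch_inf_qpow_eq_qgamma2[OF q nopole(8)]
      l_def[symmetric] e_def[symmetric] e_\<alpha> exp_l
    by (simp add: field_simps)
qed

lemma qgamma2_vwp_sum:
  fixes q :: real and \<alpha> \<beta> \<gamma> \<delta> :: complex
  assumes q: "0 < q" "q < 1" and re: "0 < Re (\<alpha> + 1 - \<beta> - \<gamma> - \<delta>)"
    and poles: "\<forall>x \<in> {\<alpha>, \<beta>, \<gamma>, \<delta>, \<alpha> + 1 - \<beta>, \<alpha> + 1 - \<gamma>, \<alpha> + 1 - \<delta>,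
      \<alpha> + 1 - \<beta> - \<gamma>, \<alpha> + 1 - \<beta> - \<delta>, \<alpha> + 1 - \<gamma> - \<delta>}. \<not> qgamma2_pole q x"
  shows "(\<lambda>n. (1 - qpow q (2 * \<alpha> + 4 * of_nat n)) * qshift2 q \<alpha> (of_nat n) * qshift2 q \<beta> (of_nat n)
        * qshift2 q \<gamma> (of_nat n) * qshift2 q \<delta> (of_nat n)
      / (of_real (1 - q ^ 2) * qfact2 q n * qshift2 q (\<alpha> + 1 - \<beta>) (of_nat n)
        * qshift2 q (\<alpha> + 1 - \<gamma>) (of_nat n) * qshift2 q (\<alpha> + 1 - \<delta>) (of_nat n))
      * qpow q (2 * (\<alpha> + 1 - \<beta> - \<gamma> - \<delta>) * of_nat n))
    sums (qgamma2 q (\<alpha> + 1 - \<beta>) * qgamma2 q (\<alpha> + 1 - \<gamma>) * qgamma2 q (\<alpha> + 1 - \<delta>)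
        * qgamma2 q (\<alpha> + 1 - \<beta> - \<gamma> - \<delta>)
      / (qgamma2 q \<alpha> * qgamma2 q (\<alpha> + 1 - \<beta> - \<gamma>) * qgamma2 q (\<alpha> + 1 - \<beta> - \<delta>)
        * qgamma2 q (\<alpha> + 1 - \<gamma> - \<delta>)))"
proof -
  note q2 = square_in_unit_interval[OF q]
  interpret very_well_poised "qpow q (2 * \<beta>)" "qpow q (2 * \<gamma>)" "qpow q (2 * \<delta>)" "q ^ 2"
    using q2 by unfold_locales (simp_all add: qpow_nonzero)
  note ratios = qpow_vwp_ratios[OF q(1)]
  have "norm (qpow q (2 * (\<alpha> + 1 - \<beta> - \<gamma> - \<delta>))) < 1"
    using q re by (intro norm_qpow_less_1) auto
  then have nopole_sum: "\<not> qgamma2_pole q (\<alpha> + 1 - \<beta> - \<gamma> - \<delta>)"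
    unfolding qgamma2_pole_def using q2 by (simp add: qpoch_inf_nonzero_if_norm_less_1)
  have "admissible (qpow q (2 * \<alpha>))"
    using poles \<open>norm (qpow q (2 * (\<alpha> + 1 - \<beta> - \<gamma> - \<delta>))) < 1\<close>
    unfolding admissible_def ratios qgamma2_pole_def by simp
  moreover note qgamma2_vwp_term_eq[OF q, of \<alpha> \<beta> \<gamma> \<delta>]
    qpoch_inf_vwp_quotient_eq_qgamma2[OF q, of \<alpha> \<beta> \<gamma> \<delta>]
  ultimately show ?thesis
    using sums_divide[OF vwp_sum, of "qpow q (2 * \<alpha>)" "of_real (1 - q ^ 2)"] poles nopole_sum
    unfolding ratios by simp
qed

lemma qgamma2_1:
  assumes "0 < q" "q < 1"
  shows "qgamma2 q 1 = 1"
  using qpoch_inf_q2_nonzero[OF assms] assms(1) by (simp add: qgamma2_def qpow_2)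

lemma constant_eq_qgamma2_quotient:
  assumes q: "0 < q" "q < 1"
  shows "qnum2 q (1/6) * qpoch_inf (qpow q (4/3)) (q ^ 2) * qpoch_inf (qpow q (2/3)) (q ^ 2) * qpow q (1/4)
      / (qpoch_inf (qpow q (1/3)) (q ^ 2) * qpoch_inf (qpow q (5/3)) (q ^ 2) * pi_q q)
    = qgamma2 q (7/6) * qgamma2 q (5/6) / (qgamma2 q (1/2) ^ 2 * qgamma2 q (1/3) * qgamma2 q (2/3))"
proof -
  note q2 = square_in_unit_interval[OF q]
  define E where "E x = qpoch_inf (qpow q (2 * x)) (q ^ 2)" for x
  define l where "l = (of_real (ln (1 - q ^ 2)) :: complex)"
  define e where "e x = exp ((1 - x) * l)" for x
  have E_nonzero: "E x \<noteq> 0" if "0 < Re x" for x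
    unfolding E_def using q q2 that by (intro qpoch_inf_nonzero_if_norm_less_1 norm_qpow_less_1) auto
  have qgamma2_E: "qgamma2 q x = E 1 * e x / E x" for x
    using q(1) by (simp add: qgamma2_def E_def e_def l_def qpow_2)
  have "qpow q (1/3) * of_real (q ^ 2) = qpow q (7/3)"
    using q(1) qpow_add[of q "1/3" 2] by (simp add: qpow_2)
  then have E_sixth: "E (1/6) = (1 - qpow q (1/3)) * E (7/6)"
    unfolding E_def using qpoch_inf_Suc[OF q2, of "qpow q (1/3)"] by simp
  have E_vals: "qpoch_inf (qpow q (4/3)) (q ^ 2) = E (2/3)" "qpoch_inf (qpow q (2/3)) (q ^ 2) = E (1/3)"
    "qpoch_inf (qpow q (1/3)) (q ^ 2) = E (1/6)" "qpoch_inf (qpow q (5/3)) (q ^ 2) = E (5/6)"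
    by (simp_all add: E_def)
  have "qpow q 1 = of_real q"
    using qpow_of_nat[OF q(1), of 1] by simp
  then have pi_q_E: "pi_q q = of_real (1 - q ^ 2) * qpow q (1/4) * E 1 ^ 2 / E (1/2) ^ 2"
    using q(1) by (simp add: pi_q_def E_def qpow_2)
  have qnum2_sixth: "qnum2 q (1/6) = (1 - qpow q (1/3)) / of_real (1 - q ^ 2)"
    by (simp add: qnum2_def)
  have exp_l: "exp l = of_real (1 - q ^ 2)"
    using q2 by (simp add: l_def exp_of_real)
  have e_third: "e (1/3) = exp l ^ 2 * e (7/6) * e (5/6) / (e (1/2) ^ 2 * e (2/3))"
    unfolding e_def power2_eq_square exp_add[symmetric] exp_diff[symmetric]
    by (rule arg_cong[where f = exp]) (simp add: algebra_simps)
  have "1 - qpow q (1/3) \<noteq> 0" "e x \<noteq> 0" for x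
    using norm_qpow_less_1[OF q, of "1/3"] by (auto simp: e_def)
  moreover have "(of_real (1 - q ^ 2) :: complex) \<noteq> 0"
    unfolding of_real_eq_0_iff using q2 by simp
  ultimately show ?thesis
    using E_nonzero[of 1] E_nonzero[of "1/2"] E_nonzero[of "1/3"] E_nonzero[of "2/3"]
      E_nonzero[of "7/6"] E_nonzero[of "5/6"] qpow_nonzero[of q "1/4"]
    unfolding E_vals E_sixth pi_q_E qnum2_sixth qgamma2_E e_third exp_l
    by (simp only: field_simps) (simp add: ac_simps power2_eq_square)
qed

theorem theorem3p2:
  fixes q :: real and a b c d :: complex
  assumes q0: "0 < q" and q1: "q < 1"
    and re: "Re (a + b + c + d) > 0"
    and poles_sum: "\<And>n::nat. \<forall>x \<in> {1/2 + a + of_nat n, 1/2 + of_nat n - b, 1/3 + of_nat n - c,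
                2/3 + of_nat n - d, 1 + a + b + of_nat n, 7/6 + a + c + of_nat n,
                5/6 + a + d + of_nat n}. \<not> qgamma2_pole q x"
    and poles_rhs: "\<forall>x \<in> {1/2 - b, 1/3 - c, 2/3 - d, a + b + c + d,
                1/3 + a + b + d, 2/3 + a + b + c, 1/2 + a + c + d}. \<not> qgamma2_pole q x"
  shows "(\<lambda>n::nat.
      (1 - qpow q (4 * of_nat n + 2 * a + 1)) * qshift2 q (1/2) (a + of_nat n)
        * qshift2 q (1/2) (of_nat n - b) * qshift2 q (1/3) (of_nat n - c)
        * qshift2 q (2/3) (of_nat n - d)
      / (of_real (1 - q^2) * qfact2 q n * qshift2 q 1 (a + b + of_nat n)
        * qshift2 q (7/6) (a + c + of_nat n) * qshift2 q (5/6) (a + d + of_nat n))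
      * qpow q (2 * (a + b + c + d) * of_nat n))
    sums
     (qshift2 q (1/2) (- b) * qshift2 q (1/3) (- c) * qshift2 q (2/3) (- d)
        * qshift2 q 1 (a + b + c + d - 1)
      / (qshift2 q (1/3) (a + b + d) * qshift2 q (2/3) (a + b + c) * qshift2 q (1/2) (a + c + d))
      * (qnum2 q (1/6) * qpoch_inf (qpow q (4/3)) (q^2) * qpoch_inf (qpow q (2/3)) (q^2)
           * qpow q (1/4)
         / (qpoch_inf (qpow q (1/3)) (q^2) * qpoch_inf (qpow q (5/3)) (q^2) * pi_q q)))"
proof -
  define \<alpha> \<beta> \<gamma> \<delta> where "\<alpha> = 1/2 + a" and "\<beta> = 1/2 - b" and "\<gamma> = 1/3 - c" and "\<delta> = 2/3 - d"
  txt \<open>Chained as unfolding rewrites them, innermost subtraction first.\<close>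
  have params: "\<alpha> + 1 - \<beta> = 1 + (a + b)" "\<alpha> + 1 - \<gamma> = 7/6 + (a + c)" "\<alpha> + 1 - \<delta> = 5/6 + (a + d)"
    "1 + (a + b) - \<gamma> = 2/3 + (a + b + c)" "1 + (a + b) - \<delta> = 1/3 + (a + b + d)"
    "7/6 + (a + c) - \<delta> = 1/2 + (a + c + d)" "2/3 + (a + b + c) - \<delta> = a + b + c + d"
    "2 * \<alpha> + 4 * of_nat n = 4 * of_nat n + 2 * a + 1" for n :: nat
    by (simp_all add: \<alpha>_def \<beta>_def \<gamma>_def \<delta>_def algebra_simps)
  have nopole: "\<forall>x \<in> {\<alpha>, \<beta>, \<gamma>, \<delta>, 1 + (a + b), 7/6 + (a + c), 5/6 + (a + d), 2/3 + (a + b + c),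
      1/3 + (a + b + d), 1/2 + (a + c + d)}. \<not> qgamma2_pole q x"
    using poles_sum[of 0] poles_rhs by (simp add: \<alpha>_def \<beta>_def \<gamma>_def \<delta>_def add.assoc)
  have constants_nonzero: "qgamma2 q (1/2) \<noteq> 0" "qgamma2 q (1/3) \<noteq> 0" "qgamma2 q (2/3) \<noteq> 0"
    "qgamma2 q (7/6) \<noteq> 0" "qgamma2 q (5/6) \<noteq> 0"
    by (simp_all add: qgamma2_nonzero_if_Re_pos[OF q0 q1])
  note generic = qgamma2_vwp_sum[of q \<alpha> \<beta> \<gamma> \<delta>, unfolded params, OF q0 q1 re nopole]
  define K where "K = qshift2 q (1/2) a * qshift2 q (1/2) (- b) * qshift2 q (1/3) (- c) * qshift2 q (2/3) (- d)
    / (qshift2 q 1 (a + b) * qshift2 q (7/6) (a + c) * qshift2 q (5/6) (a + d))"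
  have split: "qshift2 q (1/2) (a + of_nat n) = qshift2 q (1/2) a * qshift2 q \<alpha> (of_nat n)"
    "qshift2 q (1/2) (of_nat n - b) = qshift2 q (1/2) (- b) * qshift2 q \<beta> (of_nat n)"
    "qshift2 q (1/3) (of_nat n - c) = qshift2 q (1/3) (- c) * qshift2 q \<gamma> (of_nat n)"
    "qshift2 q (2/3) (of_nat n - d) = qshift2 q (2/3) (- d) * qshift2 q \<delta> (of_nat n)"
    "qshift2 q 1 (a + b + of_nat n) = qshift2 q 1 (a + b) * qshift2 q (1 + (a + b)) (of_nat n)"
    "qshift2 q (7/6) (a + c + of_nat n) = qshift2 q (7/6) (a + c) * qshift2 q (7/6 + (a + c)) (of_nat n)"
    "qshift2 q (5/6) (a + d + of_nat n) = qshift2 q (5/6) (a + d) * qshift2 q (5/6 + (a + d)) (of_nat n)"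
    for n :: nat
    using nopole qshift2_add[of q "1/2" a] qshift2_add[of q "1/2" "- b"] qshift2_add[of q "1/3" "- c"]
      qshift2_add[of q "2/3" "- d"] qshift2_add[of q 1 "a + b"] qshift2_add[of q "7/6" "a + c"]
      qshift2_add[of q "5/6" "a + d"]
    by (simp_all add: \<alpha>_def \<beta>_def \<gamma>_def \<delta>_def qgamma2_eq_0_iff[OF q0 q1])
  txt \<open>The series is \<open>K\<close> times the one summed by \<open>generic\<close>, termwise and in value.\<close>
  show ?thesis
    apply (rule back_subst[where P = "\<lambda>s. _ sums s",
          OF sums_cong[THEN iffD1, OF _ sums_mult[OF generic, of K]]])
    subgoal
      by (unfold split K_def, simp only: divide_inverse inverse_mult_distrib ac_simps)
    subgoal
      using nopole constants_nonzero
      unfolding K_def qshift2_def constant_eq_qgamma2_quotient[OF q0 q1] qgamma2_1[OF q0 q1] \<alpha>_def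
      by (simp add: qgamma2_eq_0_iff[OF q0 q1] field_simps power2_eq_square)
    done
qed

end
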